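(* Let $r>1$. There is a nonpositive constant $C=C(r)$ such that for every sequence $(r_k)_{k\ge1}$ of numbers in $(1,r)$ increasing to $r$ the limit $\lim_{k\to\infty}\gamma_{r_k}$ exists and $$\gamma_r\ge\lim_{k\to\infty}\gamma_{r_k}\ge C>-\infty .$$
   Context: $B_c(x,\rho)$ denotes the Euclidean ball in $\mathbb{C}^n$ and $|x|$ the Euclidean norm. For $\rho>1$, $\mathcal{F}_\rho$ is the class of plurisubharmonic functions $f:\mathbb{C}^n\to\mathbb{R}$ with $\sup_{B_c(0,\rho)}f=0$ and $\sup_{B_c(0,1)}f\ge -1$. For $f\in\mathcal{F}_\rho$ and $x\in B_c(0,1)$ set $$\gamma_\rho(f;x):=\sup_{B_c\left(x,\frac{\rho-|x|}{\rho}\right)} f,\qquad \gamma_\rho:=\inf_{f\in\mathcal{F}_\rho}\ \inf_{x\in B_c(0,1)}\gamma_\rho(f;x).$$ *)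

theory Defs
  imports "HOL-Analysis.Analysis"
begin

definition usc :: "('a::topological_space \<Rightarrow> real) \<Rightarrow> bool" where
  "usc f \<longleftrightarrow> (\<forall>x c. f x < c \<longrightarrow> (\<forall>\<^sub>F y in at x. f y < c))"

text \<open>Since \<open>f\<close> is real valued, the inequality forces the
  circle average to be finite, so integrability is part of the condition.\<close>
definition psh :: "(complex ^ 'n \<Rightarrow> real) \<Rightarrow> bool" where
  "psh f \<longleftrightarrow> usc f \<and>
     (\<forall>a b. set_integrable lborel {0..2*pi} (\<lambda>t. f (a + cis t *s b)) \<and>
            f a \<le> (1 / (2*pi)) * (LINT t:{0..2*pi}|lborel. f (a + cis t *s b)))"

definition Fclass :: "real \<Rightarrow> (complex ^ 'n \<Rightarrow> real) set" where
  "Fclass \<rho> = {f. psh f \<and> (SUP y\<in>ball 0 \<rho>. ereal (f y)) = 0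
                      \<and> (SUP y\<in>ball 0 1. ereal (f y)) \<ge> -1}"

definition gamma_fx :: "real \<Rightarrow> (complex ^ 'n \<Rightarrow> real) \<Rightarrow> complex ^ 'n \<Rightarrow> ereal" where
  "gamma_fx \<rho> f x = (SUP y\<in>ball x ((\<rho> - norm x) / \<rho>). ereal (f y))"

text \<open>\<open>\<gamma>\<^sub>\<rho>\<close> in dimension \<open>n = CARD('n)\<close>.\<close>
definition gamma :: "'n::finite itself \<Rightarrow> real \<Rightarrow> ereal" where
  "gamma _ \<rho> = (INF f\<in>(Fclass \<rho> :: (complex ^ 'n \<Rightarrow> real) set).
                   INF x\<in>(ball 0 1 :: (complex ^ 'n) set). gamma_fx \<rho> f x)"

end

(* Monotonicity: given f in F_rho' and x, let h be an affine function of one coordinate whose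
   supremum on B(0,rho) is 0 and which lies below f(x) on the ball defining gamma_rho(.;x).
   Then max f h is in F_rho and gamma_rho(max f h; x) <= gamma_rho'(f; x), so rho -> gamma_rho is
   nondecreasing on (1,oo) and gamma_{r_k} converges to its supremum, which is <= gamma_r.

   Lower bound: if f in F_rho is <= -K on a ball of fixed radius around x, then the
   sub-mean-value inequality on circles, applied along a chain of N = N(rho) balls of halving
   radii from x to any y in B(0,1), gives f(y) <= -c K with c = c(rho) > 0.  Since
   sup_{B(0,1)} f >= -1, this forces gamma_rho >= -2/c; take rho = (1 + r)/2 < r_k. *)

theory Submission
  imports Defs
begin

lemma norm_cis_minus_one_le: "norm (cis t - 1) \<le> \<bar>t\<bar>"
proof -
  have "norm (cis t - 1) = 2 * \<bar>sin (t / 2)\<bar>"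
    using dist_exp_i_1[of t] by (simp add: cis_conv_exp)
  also have "\<dots> \<le> 2 * \<bar>t / 2\<bar>"
    using abs_sin_x_le_abs_x[of "t / 2"] by simp
  finally show ?thesis by simp
qed

lemma norm_vector_scalar_mult:
  fixes c :: "'a::real_normed_div_algebra"
  shows "norm (c *s x) = norm c * norm x"
  unfolding norm_vec_def by (simp add: norm_mult L2_set_right_distrib)

lemma norm_axis: "norm (axis i c) = norm c"
  unfolding norm_vec_def L2_set_def axis_def
  by (simp add: if_distrib[of norm] if_distrib[of "\<lambda>x. x^2"] cong: if_cong)

lemma Re_vec_nth_le_norm: "Re (z $ i) \<le> norm (z :: complex^'n)"
  using complex_Re_le_cmod[of "z $ i"] Finite_Cartesian_Product.norm_nth_le[of z i] by linarith

subsection \<open>Plurisubharmonic functions\<close>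

lemma continuous_imp_usc: "continuous_on UNIV f \<Longrightarrow> usc f"
  unfolding usc_def continuous_on_def
  by (metis UNIV_I order_tendstoD(2))

lemma usc_max:
  assumes "usc f" "usc g"
  shows "usc (\<lambda>x. max (f x) (g x))"
  unfolding usc_def
proof (intro allI impI)
  fix x c
  assume "max (f x) (g x) < c"
  with assms have "\<forall>\<^sub>F y in at x. f y < c" "\<forall>\<^sub>F y in at x. g y < c"
    unfolding usc_def by auto
  then show "\<forall>\<^sub>F y in at x. max (f y) (g y) < c"
    by eventually_elim simp
qed

lemma psh_max:
  assumes "psh f" "psh g"
  shows "psh (\<lambda>z. max (f z) (g z))"
proof -
  have "set_integrable lborel {0..2*pi} (\<lambda>t. max (f (a + cis t *s b)) (g (a + cis t *s b))) \<and>
     max (f a) (g a) \<le> 1 / (2*pi) * (LINT t:{0..2*pi}|lborel. max (f (a + cis t *s b)) (g (a + cis t *s b)))"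
    for a b
  proof -
    define F where "F t = f (a + cis t *s b)" for t
    define G where "G t = g (a + cis t *s b)" for t
    have iF: "set_integrable lborel {0..2*pi} F"
      and mF: "f a \<le> (1 / (2*pi)) * (LINT t:{0..2*pi}|lborel. F t)"
      and iG: "set_integrable lborel {0..2*pi} G"
      and mG: "g a \<le> (1 / (2*pi)) * (LINT t:{0..2*pi}|lborel. G t)"
      using assms unfolding psh_def F_def G_def by auto
    have iM: "set_integrable lborel {0..2*pi} (\<lambda>t. max (F t) (G t))"
    proof -
      have "integrable lborel (\<lambda>t. max (indicator {0..2*pi} t *\<^sub>R F t) (indicator {0..2*pi} t *\<^sub>R G t))"
        using iF iG unfolding set_integrable_def by (rule integrable_max)
      moreover have "(\<lambda>t. indicator {0..2*pi} t *\<^sub>R max (F t) (G t)) =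
          (\<lambda>t. max (indicator {0..2*pi} t *\<^sub>R F t) (indicator {0..2*pi} t *\<^sub>R G t))"
        by (auto simp: fun_eq_iff split: split_indicator)
      ultimately show ?thesis
        unfolding set_integrable_def by simp
    qed
    have "(LINT t:{0..2*pi}|lborel. F t) \<le> (LINT t:{0..2*pi}|lborel. max (F t) (G t))"
      "(LINT t:{0..2*pi}|lborel. G t) \<le> (LINT t:{0..2*pi}|lborel. max (F t) (G t))"
      by (auto intro: set_integral_mono[OF iF iM] set_integral_mono[OF iG iM])
    then have "(1 / (2*pi)) * (LINT t:{0..2*pi}|lborel. F t) \<le> (1 / (2*pi)) * (LINT t:{0..2*pi}|lborel. max (F t) (G t))"
      "(1 / (2*pi)) * (LINT t:{0..2*pi}|lborel. G t) \<le> (1 / (2*pi)) * (LINT t:{0..2*pi}|lborel. max (F t) (G t))"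
      by (simp_all add: divide_right_mono)
    with mF mG have "max (f a) (g a) \<le> (1 / (2*pi)) * (LINT t:{0..2*pi}|lborel. max (F t) (G t))"
      by linarith
    with iM show ?thesis
      unfolding F_def G_def by blast
  qed
  moreover have "usc (\<lambda>z. max (f z) (g z))"
    using assms by (intro usc_max) (auto simp: psh_def)
  ultimately show ?thesis
    unfolding psh_def by blast
qed

lemma psh_affine_Re_component: "psh (\<lambda>z::complex^'n. \<alpha> * Re (z $ i) + \<beta>)"
proof -
  have "set_integrable lborel {0..2*pi} (\<lambda>t. \<alpha> * Re ((a + cis t *s b) $ i) + \<beta>) \<and>
      \<alpha> * Re (a $ i) + \<beta> \<le> 1 / (2*pi) * (LINT t:{0..2*pi}|lborel. \<alpha> * Re ((a + cis t *s b) $ i) + \<beta>)"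
    for a b :: "complex^'n"
  proof -
    define H where "H t = \<alpha> * (Re (a $ i) + cos t * Re (b $ i) - sin t * Im (b $ i)) + \<beta>" for t
    define P where "P t = \<alpha> * (Re (a $ i) * t + sin t * Re (b $ i) + cos t * Im (b $ i)) + \<beta> * t" for t
    have on_circle: "\<alpha> * Re ((a + cis t *s b) $ i) + \<beta> = H t" for t
      unfolding H_def by (simp add: cis.code)
    have cont: "continuous_on {0..2*pi} H"
      unfolding H_def by (intro continuous_intros)
    have "(LINT t:{0..2*pi}|lborel. H t) = P (2*pi) - P 0"
      unfolding set_lebesgue_integral_def
    proof (rule integral_FTC_atLeastAtMost[OF _ _ cont])
      fix t
      show "(P has_vector_derivative H t) (at t within {0..2*pi})"
        unfolding P_def H_def has_real_derivative_iff_has_vector_derivative[symmetric]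
        by (auto intro!: derivative_eq_intros simp: algebra_simps)
    qed simp
    also have "\<dots> = 2 * pi * (\<alpha> * Re (a $ i) + \<beta>)"
      unfolding P_def by (simp add: algebra_simps)
    finally show ?thesis
      unfolding on_circle using borel_integrable_atLeastAtMost'[OF cont] by simp
  qed
  moreover have "usc (\<lambda>z::complex^'n. \<alpha> * Re (z $ i) + \<beta>)"
    by (intro continuous_imp_usc continuous_intros)
  ultimately show ?thesis
    unfolding psh_def by blast
qed

lemma Fclass_nonpos:
  assumes "f \<in> Fclass \<rho>" "norm z < \<rho>"
  shows "f z \<le> 0"
proof -
  have "ereal (f z) \<le> (SUP y\<in>ball 0 \<rho>. ereal (f y))"
    by (rule SUP_upper) (use assms(2) in simp)
  also have "\<dots> = 0"
    using assms(1) unfolding Fclass_def by simp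
  finally show ?thesis by simp
qed

subsection \<open>A lower bound for \<open>\<gamma>\<^sub>\<rho>\<close>\<close>

text \<open>For \<open>0 \<le> t \<le> \<eta>/8\<close> the point \<open>a + cis t *s b\<close> lies in \<open>ball w \<eta>\<close>, where \<open>f \<le> -A\<close>;
  on the rest of the circle \<open>f \<le> 0\<close>.\<close>

lemma psh_le_if_circle_meets_ball:
  fixes f :: "complex^'n \<Rightarrow> real"
  assumes "psh f" and nonpos: "\<And>z. norm z < \<rho> \<Longrightarrow> f z \<le> 0"
    and "0 \<le> A" "0 < \<eta>" "\<eta> \<le> 1"
    and near_w: "\<And>z. dist z w < \<eta> \<Longrightarrow> f z \<le> - A"
    and "norm b \<le> 2" "norm a + norm b < \<rho>" "dist (a + b) w < \<eta> / 2"
  shows "f a \<le> - A * \<eta> / (16 * pi)"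
proof -
  define F where "F t = f (a + cis t *s b)" for t
  define G where "G t = - A * indicator {0..\<eta>/8} t" for t :: real
  have arc: "\<eta> / 8 \<le> 2 * pi"
    using \<open>\<eta> \<le> 1\<close> pi_gt3 by linarith
  have intF: "set_integrable lborel {0..2*pi} F"
    and mean: "f a \<le> (1 / (2*pi)) * (LINT t:{0..2*pi}|lborel. F t)"
    using \<open>psh f\<close> unfolding psh_def F_def by auto
  have intG: "set_integrable lborel {0..2*pi} G"
    unfolding G_def set_integrable_def using \<open>0 < \<eta>\<close>
    by (intro integrable_mult_indicator integrable_mult_right integrable_real_indicator) auto
  have "F t \<le> G t" if t: "t \<in> {0..2*pi}" for t
  proof (cases "t \<le> \<eta> / 8")
    case True
    have "a + cis t *s b - (a + b) = (cis t - 1) *s b"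
      by (simp add: vec_eq_iff algebra_simps)
    then have "dist (a + cis t *s b) (a + b) = norm (cis t - 1) * norm b"
      unfolding dist_norm by (simp only: norm_vector_scalar_mult)
    also have "\<dots> \<le> t * 2"
      using norm_cis_minus_one_le[of t] \<open>norm b \<le> 2\<close> t by (intro mult_mono) auto
    finally have "dist (a + cis t *s b) w < \<eta>"
      using dist_triangle[of "a + cis t *s b" w "a + b"] \<open>dist (a + b) w < \<eta> / 2\<close> \<open>0 < \<eta>\<close> True t
      by linarith
    then show ?thesis
      using near_w True t unfolding F_def G_def by auto
  next
    case False
    have "norm (a + cis t *s b) \<le> norm a + norm b"
      using norm_triangle_ineq[of a "cis t *s b"] by (simp add: norm_vector_scalar_mult)
    then show ?thesis
      using nonpos \<open>norm a + norm b < \<rho>\<close> False unfolding F_def G_def by auto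
  qed
  then have "(LINT t:{0..2*pi}|lborel. F t) \<le> (LINT t:{0..2*pi}|lborel. G t)"
    by (intro set_integral_mono[OF intF intG])
  also have "(LINT t:{0..2*pi}|lborel. G t) = integral\<^sup>L lborel G"
    unfolding set_lebesgue_integral_def G_def using arc
    by (intro Bochner_Integration.integral_cong refl) (auto split: split_indicator)
  also have "\<dots> = - A * measure lborel {0..\<eta>/8}"
    unfolding G_def by simp
  also have "\<dots> = - A * (\<eta> / 8)"
    using \<open>0 < \<eta>\<close> by simp
  finally have "(1 / (2*pi)) * (LINT t:{0..2*pi}|lborel. F t) \<le> (1 / (2*pi)) * (- A * (\<eta> / 8))"
    by (intro mult_left_mono) auto
  with mean show ?thesis
    by (simp add: field_simps)
qed

lemma psh_bound_propagates:
  fixes f :: "complex^'n \<Rightarrow> real"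
  assumes "psh f" and nonpos: "\<And>z. norm z < \<rho> \<Longrightarrow> f z \<le> 0"
    and "0 \<le> A" and \<eta>: "0 < \<eta>" "\<eta> \<le> 1" "\<eta> \<le> \<rho> - 1"
    and near_p: "\<And>z. dist z p < \<eta> \<Longrightarrow> f z \<le> - A"
    and "norm q < 1" and step: "norm (p - q) \<le> min 2 ((\<rho> - 1) / 2)"
    and "dist z q < \<eta> / 2"
  shows "f z \<le> - A * \<eta> / (16 * pi)"
proof (rule psh_le_if_circle_meets_ball[OF \<open>psh f\<close> nonpos \<open>0 \<le> A\<close> \<eta>(1,2) near_p])
  show "norm (p - q) \<le> 2"
    using step by simp
  have "norm z \<le> norm q + dist z q"
    using norm_triangle_sub[of z q] by (simp add: dist_norm)
  then show "norm z + norm (p - q) < \<rho>"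
    using \<open>norm q < 1\<close> \<open>dist z q < \<eta> / 2\<close> \<eta>(3) step by simp
  show "dist (z + (p - q)) p < \<eta> / 2"
    using \<open>dist z q < \<eta> / 2\<close> by (simp add: dist_norm algebra_simps)
qed

lemma psh_bound_along_chain:
  fixes f :: "complex^'n \<Rightarrow> real" and p :: "nat \<Rightarrow> complex^'n"
  assumes "psh f" and nonpos: "\<And>z. norm z < \<rho> \<Longrightarrow> f z \<le> 0"
    and "0 \<le> K" and \<eta>: "0 < \<eta>" "\<eta> \<le> 1" "\<eta> \<le> \<rho> - 1"
    and inside: "\<And>k. k \<le> N \<Longrightarrow> norm (p k) < 1"
    and steps: "\<And>k. k < N \<Longrightarrow> norm (p k - p (Suc k)) \<le> min 2 ((\<rho> - 1) / 2)"
    and start: "\<And>z. dist z (p 0) < \<eta> \<Longrightarrow> f z \<le> - K"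
  shows "k \<le> N \<Longrightarrow> dist z (p k) < \<eta> / 2 ^ k \<Longrightarrow> f z \<le> - K * (\<eta> / 2 ^ N / (16 * pi)) ^ k"
proof (induction k arbitrary: z)
  case 0
  then show ?case
    using start by simp
next
  case (Suc k)
  define c where "c = \<eta> / 2 ^ N / (16 * pi)"
  have "(2::real) ^ k \<le> 2 ^ N"
    using Suc.prems(1) by (intro power_increasing) auto
  then have c: "0 \<le> c" "c \<le> \<eta> / 2 ^ k / (16 * pi)"
    unfolding c_def using \<eta>(1) by (auto intro!: divide_right_mono divide_left_mono)
  have "\<eta> / 2 ^ k \<le> \<eta>"
    using \<eta>(1) by (simp add: divide_le_eq)
  then have \<eta>k: "0 < \<eta> / 2 ^ k" "\<eta> / 2 ^ k \<le> 1" "\<eta> / 2 ^ k \<le> \<rho> - 1"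
    using \<eta> by (simp, linarith, linarith)
  have near: "\<And>z. dist z (p k) < \<eta> / 2 ^ k \<Longrightarrow> f z \<le> - (K * c ^ k)"
    using Suc by (simp add: c_def)
  have "0 \<le> K * c ^ k"
    using \<open>0 \<le> K\<close> c(1) by simp
  from psh_bound_propagates[OF \<open>psh f\<close> nonpos this \<eta>k near inside[of "Suc k"] steps[of k]]
  have "f z \<le> - (K * c ^ k) * (\<eta> / 2 ^ k) / (16 * pi)"
    using Suc.prems by simp
  also have "\<dots> = - (K * c ^ k * (\<eta> / 2 ^ k / (16 * pi)))"
    by simp
  also have "\<dots> \<le> - (K * c ^ k * c)"
    using mult_left_mono[OF c(2) \<open>0 \<le> K * c ^ k\<close>] by linarith
  finally have "f z \<le> - K * c ^ Suc k"
    by (simp add: mult_ac)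
  then show ?case
    unfolding c_def .
qed

text \<open>The chain from \<open>x\<close> to \<open>y\<close> has \<open>chain_length \<rho>\<close> steps of length \<open>\<le> 2 / chain_length \<rho> \<le> (\<rho> - 1) / 2\<close>;
  \<open>chain_radius \<rho>\<close> is at most the radius \<open>(\<rho> - |x|) / \<rho>\<close> of the ball defining \<open>\<gamma>\<^sub>\<rho>(f;x)\<close>.\<close>

definition chain_radius :: "real \<Rightarrow> real" where
  "chain_radius \<rho> = min 1 ((\<rho> - 1) / \<rho>)"

definition chain_length :: "real \<Rightarrow> nat" where
  "chain_length \<rho> = nat \<lceil>4 / (\<rho> - 1)\<rceil> + 1"

definition harnack_factor :: "real \<Rightarrow> real" where
  "harnack_factor \<rho> = (chain_radius \<rho> / 2 ^ chain_length \<rho> / (16 * pi)) ^ chain_length \<rho>"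

lemma chain_radius_bounds:
  assumes "1 < \<rho>"
  shows "0 < chain_radius \<rho>" "chain_radius \<rho> \<le> 1" "chain_radius \<rho> \<le> \<rho> - 1"
    "chain_radius \<rho> \<le> (\<rho> - 1) / \<rho>"
proof -
  have "(\<rho> - 1) / \<rho> \<le> \<rho> - 1"
    using assms by (simp add: divide_le_eq)
  then show "0 < chain_radius \<rho>" "chain_radius \<rho> \<le> 1" "chain_radius \<rho> \<le> \<rho> - 1"
    "chain_radius \<rho> \<le> (\<rho> - 1) / \<rho>"
    using assms unfolding chain_radius_def by auto
qed

lemma harnack_factor_pos: "1 < \<rho> \<Longrightarrow> 0 < harnack_factor \<rho>"
  using chain_radius_bounds(1) unfolding harnack_factor_def by simp

lemma psh_bound_spreads:
  fixes f :: "complex^'n \<Rightarrow> real"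
  assumes "psh f" and nonpos: "\<And>z. norm z < \<rho> \<Longrightarrow> f z \<le> 0" and "1 < \<rho>"
    and "norm x < 1" "norm y < 1" "0 \<le> K"
    and near_x: "\<And>z. dist z x < chain_radius \<rho> \<Longrightarrow> f z \<le> - K"
  shows "f y \<le> - K * harnack_factor \<rho>"
proof -
  define N where "N = chain_length \<rho>"
  define p where "p k = x + (real k / real N) *\<^sub>R (y - x)" for k
  have "1 \<le> N"
    unfolding N_def chain_length_def by simp
  have "4 / (\<rho> - 1) \<le> real N"
    unfolding N_def chain_length_def by linarith
  then have "2 / real N \<le> (\<rho> - 1) / 2"
    using \<open>1 < \<rho>\<close> \<open>1 \<le> N\<close> by (simp add: field_simps)
  have "closed_segment x y \<subseteq> ball 0 1"
    using \<open>norm x < 1\<close> \<open>norm y < 1\<close> by (intro closed_segment_subset) auto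
  moreover have "p k \<in> closed_segment x y" if "k \<le> N" for k
    unfolding in_segment p_def using that \<open>1 \<le> N\<close>
    by (intro exI[of _ "real k / real N"]) (auto simp: algebra_simps)
  ultimately have inside: "norm (p k) < 1" if "k \<le> N" for k
    using that by (metis subsetD mem_ball_0)
  have "p k - p (Suc k) = (- 1 / real N) *\<^sub>R (y - x)" for k
    unfolding p_def using \<open>1 \<le> N\<close> by (simp add: algebra_simps add_divide_distrib)
  then have "norm (p k - p (Suc k)) = norm (y - x) / real N" for k
    by simp
  moreover have "norm (y - x) \<le> 2"
    using norm_triangle_ineq4[of y x] \<open>norm x < 1\<close> \<open>norm y < 1\<close> by linarith
  ultimately have steps: "norm (p k - p (Suc k)) \<le> min 2 ((\<rho> - 1) / 2)" for k
    using \<open>1 \<le> N\<close> \<open>2 / real N \<le> (\<rho> - 1) / 2\<close>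
    by (auto simp: divide_le_eq intro: order_trans[OF divide_right_mono])
  have "f (p N) \<le> - K * (chain_radius \<rho> / 2 ^ N / (16 * pi)) ^ N"
    using psh_bound_along_chain[where p = p and N = N, OF \<open>psh f\<close> nonpos \<open>0 \<le> K\<close>
        chain_radius_bounds(1-3)[OF \<open>1 < \<rho>\<close>] inside steps, of N "p N"]
      near_x \<open>1 \<le> N\<close> chain_radius_bounds(1)[OF \<open>1 < \<rho>\<close>]
    by (simp add: p_def)
  moreover have "p N = y"
    unfolding p_def using \<open>1 \<le> N\<close> by simp
  ultimately show ?thesis
    unfolding harnack_factor_def N_def by simp
qed

lemma gamma_ge_harnack_bound:
  assumes "1 < \<rho>"
  shows "ereal (- 2 / harnack_factor \<rho>) \<le> gamma TYPE('n::finite) \<rho>"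
  unfolding gamma_def
proof (intro INF_greatest)
  fix f :: "complex^'n \<Rightarrow> real" and x :: "complex^'n"
  assume f: "f \<in> Fclass \<rho>" and "x \<in> ball 0 1"
  define H where "H = harnack_factor \<rho>"
  have "H > 0"
    unfolding H_def using harnack_factor_pos[OF assms] .
  have "ereal (-2) < -1"
    by (simp add: one_ereal_def)
  also have "-1 \<le> (SUP y\<in>ball 0 1. ereal (f y))"
    using f unfolding Fclass_def by simp
  finally obtain y :: "complex^'n" where "y \<in> ball 0 1" "-2 < f y"
    by (auto simp: less_SUP_iff)
  have "(\<rho> - 1) / \<rho> \<le> (\<rho> - norm x) / \<rho>"
    using \<open>x \<in> ball 0 1\<close> assms by (intro divide_right_mono) auto
  then have radius: "chain_radius \<rho> \<le> (\<rho> - norm x) / \<rho>"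
    using chain_radius_bounds(4)[OF assms] by linarith
  show "ereal (- 2 / H) \<le> gamma_fx \<rho> f x"
    unfolding gamma_fx_def
  proof (rule ereal_le_real)
    fix s
    assume "(SUP z\<in>ball x ((\<rho> - norm x) / \<rho>). ereal (f z)) \<le> ereal s"
    then have near_x: "f z \<le> - (- s)" if "dist z x < chain_radius \<rho>" for z
      using radius that by (auto simp: SUP_le_iff dist_commute)
    have "- 2 \<le> s * H"
    proof (cases "s < 0")
      case True
      have "f y \<le> - (- s) * H"
        unfolding H_def using f True \<open>x \<in> ball 0 1\<close> \<open>y \<in> ball 0 1\<close>
        by (intro psh_bound_spreads[OF _ _ assms _ _ _ near_x])
          (auto simp: Fclass_def intro: Fclass_nonpos)
      with \<open>-2 < f y\<close> show ?thesis
        by simp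
    next
      case False
      with \<open>H > 0\<close> have "0 \<le> s * H"
        by simp
      then show ?thesis
        by simp
    qed
    then have "- 2 / H \<le> s"
      by (subst pos_divide_le_eq[OF \<open>H > 0\<close>])
    then show "ereal (- 2 / H) \<le> ereal s"
      by simp
  qed
qed

subsection \<open>Monotonicity of \<open>\<gamma>\<^sub>\<rho>\<close> in \<open>\<rho>\<close>\<close>

lemma SUP_ball_Re_component_affine:
  assumes "0 < \<rho>" "0 \<le> M"
  shows "(SUP z\<in>ball (0::complex^'n) \<rho>. ereal (M * (Re (z $ i) / \<rho> - 1))) = 0"
proof (rule antisym)
  show "(SUP z\<in>ball (0::complex^'n) \<rho>. ereal (M * (Re (z $ i) / \<rho> - 1))) \<le> 0"
  proof (rule SUP_least)
    fix z :: "complex^'n"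
    assume "z \<in> ball 0 \<rho>"
    then have "Re (z $ i) / \<rho> \<le> 1"
      using Re_vec_nth_le_norm[of z i] assms by (simp add: divide_le_eq)
    then show "ereal (M * (Re (z $ i) / \<rho> - 1)) \<le> 0"
      using \<open>0 \<le> M\<close> by (simp add: mult_nonneg_nonpos)
  qed
  show "0 \<le> (SUP z\<in>ball (0::complex^'n) \<rho>. ereal (M * (Re (z $ i) / \<rho> - 1)))"
  proof (rule ereal_le_epsilon2)
    fix e :: real
    assume "0 < e"
    define \<delta> where "\<delta> = min \<rho> (\<rho> * e / (M + 1))"
    define z :: "complex^'n" where "z = axis i (complex_of_real (\<rho> - \<delta>))"
    have \<delta>: "0 < \<delta>" "\<delta> \<le> \<rho>" "\<delta> \<le> \<rho> * e / (M + 1)"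
      unfolding \<delta>_def using assms \<open>0 < e\<close> by auto
    have "z \<in> ball 0 \<rho>"
      unfolding z_def using \<delta> by (simp add: norm_axis del: of_real_diff)
    have "M * \<delta> \<le> M * (\<rho> * e / (M + 1))"
      by (rule mult_left_mono[OF \<delta>(3) \<open>0 \<le> M\<close>])
    then have "M * \<delta> / \<rho> \<le> M * e / (M + 1)"
      using assms by (simp add: pos_divide_le_eq mult_ac)
    also have "\<dots> \<le> e"
      using assms \<open>0 < e\<close> by (simp add: pos_divide_le_eq mult_right_mono)
    finally have "- e \<le> M * (Re (z $ i) / \<rho> - 1)"
      unfolding z_def using assms by (simp add: axis_def diff_divide_distrib algebra_simps)
    then have "ereal (- e) \<le> (SUP z\<in>ball (0::complex^'n) \<rho>. ereal (M * (Re (z $ i) / \<rho> - 1)))"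
      by (intro SUP_upper2[OF \<open>z \<in> ball 0 \<rho>\<close>]) simp
    then show "0 \<le> (SUP z\<in>ball (0::complex^'n) \<rho>. ereal (M * (Re (z $ i) / \<rho> - 1))) + ereal e"
      by (cases "SUP z\<in>ball (0::complex^'n) \<rho>. ereal (M * (Re (z $ i) / \<rho> - 1))") auto
  qed
qed

lemma Fclass_max:
  fixes f h :: "complex^'n \<Rightarrow> real"
  assumes f: "f \<in> Fclass \<rho>'" and "\<rho> \<le> \<rho>'" and "psh h"
    and h: "(SUP z\<in>ball 0 \<rho>. ereal (h z)) = 0"
  shows "(\<lambda>z. max (f z) (h z)) \<in> Fclass \<rho>"
proof -
  have "max (f z) (h z) \<le> 0" if "z \<in> ball 0 \<rho>" for z
  proof -
    have "f z \<le> 0"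
      using Fclass_nonpos[OF f] that \<open>\<rho> \<le> \<rho>'\<close> by simp
    moreover have "ereal (h z) \<le> 0"
      unfolding h[symmetric] using that by (rule SUP_upper)
    ultimately show ?thesis
      by simp
  qed
  then have "(SUP z\<in>ball 0 \<rho>. ereal (max (f z) (h z))) \<le> 0"
    by (intro SUP_least) simp
  moreover have "0 \<le> (SUP z\<in>ball 0 \<rho>. ereal (max (f z) (h z)))"
    unfolding h[symmetric] by (intro SUP_mono') simp
  moreover have "-1 \<le> (SUP z\<in>ball 0 1. ereal (f z))"
    using f unfolding Fclass_def by simp
  then have "-1 \<le> (SUP z\<in>ball 0 1. ereal (max (f z) (h z)))"
    by (rule order_trans) (intro SUP_mono', simp)
  ultimately show ?thesis
    using psh_max[OF _ \<open>psh h\<close>] f unfolding Fclass_def by auto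
qed

lemma gamma_fx_max_le:
  fixes f h :: "complex^'n \<Rightarrow> real"
  assumes "norm x < \<rho>'" and radii: "(\<rho> - norm x) / \<rho> \<le> (\<rho>' - norm x) / \<rho>'"
    and below: "\<And>z. z \<in> ball x ((\<rho> - norm x) / \<rho>) \<Longrightarrow> h z \<le> f x"
  shows "gamma_fx \<rho> (\<lambda>z. max (f z) (h z)) x \<le> gamma_fx \<rho>' f x"
  unfolding gamma_fx_def
proof (rule SUP_least)
  fix z
  assume z: "z \<in> ball x ((\<rho> - norm x) / \<rho>)"
  have "0 < \<rho>'"
    using \<open>norm x < \<rho>'\<close> norm_ge_zero[of x] by linarith
  with \<open>norm x < \<rho>'\<close> have "0 < (\<rho>' - norm x) / \<rho>'"
    by simp
  then have "ereal (f x) \<le> (SUP y\<in>ball x ((\<rho>' - norm x) / \<rho>'). ereal (f y))"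
    by (intro SUP_upper) simp
  then have "ereal (h z) \<le> (SUP y\<in>ball x ((\<rho>' - norm x) / \<rho>'). ereal (f y))"
    using below[OF z] by (meson ereal_less_eq(3) order_trans)
  moreover have "ereal (f z) \<le> (SUP y\<in>ball x ((\<rho>' - norm x) / \<rho>'). ereal (f y))"
    using z radii by (intro SUP_upper) auto
  ultimately show "ereal (max (f z) (h z)) \<le> (SUP y\<in>ball x ((\<rho>' - norm x) / \<rho>'). ereal (f y))"
    by (simp add: max_def)
qed

lemma norm_add_gamma_radius_lt:
  assumes "1 < \<rho>" "norm x < 1"
  shows "norm x + (\<rho> - norm x) / \<rho> < \<rho>"
proof -
  have "norm x + (\<rho> - norm x) / \<rho> = 1 + norm x / \<rho> * (\<rho> - 1)"
    using assms by (simp add: field_simps)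
  also have "\<dots> < 1 + 1 * (\<rho> - 1)"
    using assms by (intro add_strict_left_mono mult_strict_right_mono) auto
  finally show ?thesis
    by simp
qed

lemma gamma_mono:
  assumes "1 < \<rho>" "\<rho> \<le> \<rho>'"
  shows "gamma TYPE('n::finite) \<rho> \<le> gamma TYPE('n) \<rho>'"
proof -
  have "gamma TYPE('n) \<rho> \<le> gamma_fx \<rho>' f x"
    if f: "f \<in> Fclass \<rho>'" and x: "x \<in> ball (0::complex^'n) 1" for f x
  proof -
    define R where "R = (\<rho> - norm x) / \<rho>"
    define e where "e = 1 - (norm x + R) / \<rho>"
    define M where "M = (\<bar>f x\<bar> + 1) / e"
    define h where "h z = M * (Re (z $ (undefined :: 'n)) / \<rho> - 1)" for z :: "complex^'n"
      \<comment> \<open>any coordinate will do\<close>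
    have "norm x < 1"
      using x by simp
    then have "0 < e"
      unfolding e_def R_def using norm_add_gamma_radius_lt[OF \<open>1 < \<rho>\<close>] assms by simp
    have h_below: "h z \<le> f x" if "z \<in> ball x R" for z
    proof -
      have "Re (z $ undefined) \<le> norm x + R"
        using Re_vec_nth_le_norm[of z undefined] norm_triangle_sub[of z x] that
        by (simp add: dist_norm norm_minus_commute)
      then have "Re (z $ undefined) / \<rho> - 1 \<le> - e"
        unfolding e_def using assms by (simp add: divide_right_mono)
      then have "h z \<le> M * - e"
        unfolding h_def using \<open>0 < e\<close> by (intro mult_left_mono) (simp_all add: M_def)
      also have "M * - e = - (\<bar>f x\<bar> + 1)"
        unfolding M_def using \<open>0 < e\<close> by simp
      finally show ?thesis
        by linarith
    qed
    have h_affine: "h = (\<lambda>z. M / \<rho> * Re (z $ undefined) + - M)"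
      unfolding h_def using assms by (auto simp: fun_eq_iff field_simps)
    have "psh h"
      unfolding h_affine by (rule psh_affine_Re_component)
    moreover have "(SUP z\<in>ball 0 \<rho>. ereal (h z)) = 0"
      unfolding h_def using assms \<open>0 < e\<close> by (intro SUP_ball_Re_component_affine) (auto simp: M_def)
    ultimately have g: "(\<lambda>z. max (f z) (h z)) \<in> Fclass \<rho>"
      by (intro Fclass_max[OF f \<open>\<rho> \<le> \<rho>'\<close>])
    have "norm x / \<rho>' \<le> norm x / \<rho>"
      using assms by (intro divide_left_mono) auto
    then have radii: "R \<le> (\<rho>' - norm x) / \<rho>'"
      unfolding R_def using assms by (simp add: diff_divide_distrib)
    have "gamma TYPE('n) \<rho> \<le> gamma_fx \<rho> (\<lambda>z. max (f z) (h z)) x"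
      unfolding gamma_def by (rule INF_lower2[OF g]) (rule INF_lower[OF x])
    also have "\<dots> \<le> gamma_fx \<rho>' f x"
      using \<open>norm x < 1\<close> assms radii h_below unfolding R_def by (intro gamma_fx_max_le) auto
    finally show ?thesis .
  qed
  then show ?thesis
    unfolding gamma_def[of _ \<rho>'] by (intro INF_greatest) auto
qed

theorem lemma2p6:
  fixes r :: real
  assumes "r > 1"
  shows "\<exists>C::real. C \<le> 0 \<and>
    (\<forall>rs :: nat \<Rightarrow> real.
       (\<forall>k. 1 < rs k \<and> rs k < r) \<and> incseq rs \<and> rs \<longlonglongrightarrow> r \<longrightarrow>
       (\<exists>L::ereal. (\<lambda>k. gamma TYPE('n::finite) (rs k)) \<longlonglongrightarrow> L \<and>
                   L \<le> gamma TYPE('n) r \<and> ereal C \<le> L))"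
proof -
  define \<rho> where "\<rho> = (1 + r) / 2"
  have "1 < \<rho>" "\<rho> < r"
    unfolding \<rho>_def using assms by auto
  define C where "C = - 2 / harnack_factor \<rho>"
  have "C \<le> 0"
    unfolding C_def using harnack_factor_pos[OF \<open>1 < \<rho>\<close>] by simp
  moreover have "\<exists>L. (\<lambda>k. gamma TYPE('n) (rs k)) \<longlonglongrightarrow> L \<and> L \<le> gamma TYPE('n) r \<and> ereal C \<le> L"
    if rs: "\<forall>k. 1 < rs k \<and> rs k < r" "incseq rs" "rs \<longlonglongrightarrow> r" for rs
  proof (intro exI conjI)
    have "incseq (\<lambda>k. gamma TYPE('n) (rs k))"
      using rs by (auto simp: incseq_def intro!: gamma_mono)
    then show "(\<lambda>k. gamma TYPE('n) (rs k)) \<longlonglongrightarrow> (SUP k. gamma TYPE('n) (rs k))"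
      by (rule LIMSEQ_SUP)
    show "(SUP k. gamma TYPE('n) (rs k)) \<le> gamma TYPE('n) r"
      using rs by (intro SUP_least gamma_mono) (auto intro: less_imp_le)
    obtain k where "\<rho> < rs k"
      using order_tendstoD(1)[OF rs(3) \<open>\<rho> < r\<close>] by (auto simp: eventually_sequentially)
    have "ereal C \<le> gamma TYPE('n) \<rho>"
      unfolding C_def by (rule gamma_ge_harnack_bound[OF \<open>1 < \<rho>\<close>])
    also have "\<dots> \<le> gamma TYPE('n) (rs k)"
      using \<open>1 < \<rho>\<close> \<open>\<rho> < rs k\<close> by (intro gamma_mono) auto
    also have "\<dots> \<le> (SUP k. gamma TYPE('n) (rs k))"
      by (rule SUP_upper) simp
    finally show "ereal C \<le> (SUP k. gamma TYPE('n) (rs k))" .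
  qed
  ultimately show ?thesis
    by blast
qed

end
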